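(* Let $\mu$ be a probability measure on $(0,1]$ (with its Borel $\sigma$-algebra). For each $n\geq2$ and Borel $A\subseteq(0,1]$ define $$\mu_{n,\infty}(A)=\frac{\int_A \mathbb{E}_{n,p}[\tau]\,\mu(dp)}{\int_{(0,1]}\mathbb{E}_{n,p}[\tau]\,\mu(dp)}.$$ Then for every Borel set $A\subseteq(0,1]$, $\mu_{n,\infty}(A)\to\mu(A)$ as $n\to\infty$.
   Context: $G(n,p)$ denotes the Erdős–Rényi random graph on $[n]=\{1,\dots,n\}$ in which each edge is present independently with probability $p$. Given a realization $g$, let $(X_t)_{t\ge0}$ be the simple symmetric random walk on $g$ with $X_0=1$ and $\tau=\inf\{t\geq1:X_t=1\}$, with the convention $\tau=1$ if vertex $1$ is isolated. $\mathbb{E}_{n,p}[\tau]$ denotes the expectation of $\tau$ over both the walk and the random graph $G(n,p)$, i.e. $\mathbb{E}_{n,p}[\mathbb{E}_{G(n,p)}[\tau]]$. *)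

theory Defs
  imports "HOL-Probability.Probability"
begin

text \<open>Simple graphs on vertex set [n] = {1..n}, represented by their edge sets
  (sets of 2-element subsets of [n]).\<close>

definition all_edges :: "nat \<Rightarrow> nat set set" where
  "all_edges n = {e. \<exists>u v. 1 \<le> u \<and> u < v \<and> v \<le> n \<and> e = {u, v}}"

definition gnp_prob :: "nat \<Rightarrow> real \<Rightarrow> nat set set \<Rightarrow> real" where
  "gnp_prob n p g = p ^ card g * (1 - p) ^ (card (all_edges n) - card g)"

definition deg :: "nat set set \<Rightarrow> nat \<Rightarrow> nat" where
  "deg g v = card {u. {v, u} \<in> g}"

definition walk_step :: "nat set set \<Rightarrow> nat \<Rightarrow> nat \<Rightarrow> real" where
  "walk_step g u v = (if {u, v} \<in> g then 1 / real (deg g u) else 0)"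

text \<open>Probability (for the walk on the graph g on [n] started at X_0 = 1) that
  X_1, ..., X_t all differ from 1, i.e. P(tau > t): sum over all
  trajectories (X_1,...,X_t) in ([n]-{1})^t of the product of transition
  probabilities.\<close>
definition surv_prob :: "nat \<Rightarrow> nat set set \<Rightarrow> nat \<Rightarrow> real" where
  "surv_prob n g t =
     (\<Sum>xs\<in>{xs. length xs = t \<and> set xs \<subseteq> {2..n}}.
        \<Prod>i<t. walk_step g ((1 # xs) ! i) (xs ! i))"

text \<open>Expected return time E_g[tau] of the walk to vertex 1 (tau = inf{t \<ge> 1. X_t = 1}),
  computed by the tail-sum formula E[tau] = sum_{t \<ge> 0} P(tau > t) (valued in [0,\<infinity>]),
  with the convention tau = 1 if vertex 1 is isolated.\<close>
definition exp_return :: "nat \<Rightarrow> nat set set \<Rightarrow> ennreal" where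
  "exp_return n g = (if deg g 1 = 0 then 1 else (\<Sum>t. ennreal (surv_prob n g t)))"

definition exp_tau :: "nat \<Rightarrow> real \<Rightarrow> ennreal" where
  "exp_tau n p = (\<Sum>g\<in>Pow (all_edges n). ennreal (gnp_prob n p g) * exp_return n g)"

definition mu_tilt :: "real measure \<Rightarrow> nat \<Rightarrow> real set \<Rightarrow> ennreal" where
  "mu_tilt M n A = (\<integral>\<^sup>+ p\<in>A. exp_tau n p \<partial>M) / (\<integral>\<^sup>+ p. exp_tau n p \<partial>M)"

end

(* Let g be a graph on {1..n} in which vertex 1 is not isolated. Reversibility of the simple
   random walk turns the tail sum of P(tau > t) into a telescoping sum, which gives
     E_g[tau] <= 1 + (sum of deg x over x >= 2) / deg 1,
   with equality when every vertex is within distance two of vertex 1, since then the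
   probability of avoiding 1 decays geometrically.
   Under G(n,p) the degree of 1 is Binomial(n-1,p) and independent of the edges avoiding 1, so
   the average of this bound is computed from inverse moments of the binomial law: it is at
   most 2n, at most n + 2 + 3/p, and at least n - O(1) - n^2 (1-p)^(n-2). Some vertex is farther
   than two from 1 with probability at most (n-1)(1-p^2)^(n-2). Hence E_{n,p}[tau]/n is bounded
   by 2 and tends to 1 for every p in (0,1], and dominated convergence applied to these
   densities gives mu_{n,infty}(A) -> mu(A). *)

theory Submission
  imports Defs
begin

section \<open>Random subsets of a finite set\<close>

text \<open>The law of the random subset of \<open>S\<close> containing each element independently with
  probability \<open>p\<close>; \<open>gnp_prob n p = subset_weight p (all_edges n)\<close>.\<close>

definition subset_weight :: "real \<Rightarrow> 'a set \<Rightarrow> 'a set \<Rightarrow> real" where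
  "subset_weight p S g = p ^ card g * (1 - p) ^ (card S - card g)"

definition subset_expectation :: "real \<Rightarrow> 'a set \<Rightarrow> ('a set \<Rightarrow> real) \<Rightarrow> real" where
  "subset_expectation p S F = (\<Sum>g\<in>Pow S. subset_weight p S g * F g)"

lemma subset_weight_nonneg: "0 \<le> p \<Longrightarrow> p \<le> 1 \<Longrightarrow> 0 \<le> subset_weight p S g"
  by (simp add: subset_weight_def)

lemma subset_expectation_insert:
  assumes "finite S" "e \<notin> S"
  shows "subset_expectation p (insert e S) F =
    p * subset_expectation p S (\<lambda>g. F (insert e g)) + (1 - p) * subset_expectation p S F"
proof -
  have weight_in: "subset_weight p (insert e S) (insert e g) = p * subset_weight p S g"
    and weight_out: "subset_weight p (insert e S) g = (1 - p) * subset_weight p S g" if "g \<subseteq> S" for g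
  proof -
    have "finite g" "e \<notin> g" "card g \<le> card S"
      using that assms finite_subset card_mono by blast+
    then show "subset_weight p (insert e S) (insert e g) = p * subset_weight p S g"
      "subset_weight p (insert e S) g = (1 - p) * subset_weight p S g"
      using assms by (simp_all add: subset_weight_def Suc_diff_le)
  qed
  have "inj_on (insert e) (Pow S)" "Pow S \<inter> insert e ` Pow S = {}"
    using assms by (auto simp: inj_on_def)
  then have "subset_expectation p (insert e S) F =
      (\<Sum>g\<in>Pow S. subset_weight p (insert e S) (insert e g) * F (insert e g)) +
      (\<Sum>g\<in>Pow S. subset_weight p (insert e S) g * F g)"
    using assms by (simp add: subset_expectation_def Pow_insert sum.union_disjoint sum.reindex)
  then show ?thesis
    by (simp add: subset_expectation_def weight_in weight_out sum_distrib_left mult.assoc)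
qed

lemma subset_expectation_cong:
  "(\<And>g. g \<subseteq> S \<Longrightarrow> F g = G g) \<Longrightarrow> subset_expectation p S F = subset_expectation p S G"
  by (simp add: subset_expectation_def)

lemma subset_expectation_empty [simp]: "subset_expectation p {} F = F {}"
  by (simp add: subset_expectation_def subset_weight_def)

lemma subset_expectation_const: "finite S \<Longrightarrow> subset_expectation p S (\<lambda>_. c) = c"
  by (induction S rule: finite_induct) (simp_all add: subset_expectation_insert algebra_simps)

lemma subset_expectation_add:
  "subset_expectation p S (\<lambda>g. F g + G g) = subset_expectation p S F + subset_expectation p S G"
  by (simp add: subset_expectation_def distrib_left sum.distrib)

lemma subset_expectation_diff:
  "subset_expectation p S (\<lambda>g. F g - G g) = subset_expectation p S F - subset_expectation p S G"
  by (simp add: subset_expectation_def right_diff_distrib sum_subtractf)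

lemma subset_expectation_cmult:
  "subset_expectation p S (\<lambda>g. c * F g) = c * subset_expectation p S F"
  by (simp add: subset_expectation_def sum_distrib_left algebra_simps)

lemma subset_expectation_sum:
  "subset_expectation p S (\<lambda>g. \<Sum>i\<in>I. F i g) = (\<Sum>i\<in>I. subset_expectation p S (F i))"
  by (simp add: subset_expectation_def sum_distrib_left sum.swap[of _ "Pow S"])

lemma subset_expectation_mono:
  assumes "0 \<le> p" "p \<le> 1" "\<And>g. g \<subseteq> S \<Longrightarrow> F g \<le> G g"
  shows "subset_expectation p S F \<le> subset_expectation p S G"
  unfolding subset_expectation_def
  by (intro sum_mono mult_left_mono) (auto simp: assms subset_weight_nonneg)

lemma subset_expectation_Int:
  assumes "finite E" "S \<subseteq> E"
  shows "subset_expectation p E (\<lambda>g. F (g \<inter> S)) = subset_expectation p S F"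
proof -
  have "finite D \<Longrightarrow> D \<inter> S = {} \<Longrightarrow>
      subset_expectation p (S \<union> D) (\<lambda>g. F (g \<inter> S)) = subset_expectation p S F" for D
  proof (induction D rule: finite_induct)
    case empty
    show ?case by (simp add: subset_expectation_def Int_absorb2)
  next
    case (insert e D)
    have "S \<union> insert e D = insert e (S \<union> D)" "finite (S \<union> D)" "e \<notin> S \<union> D"
      using insert finite_subset[OF assms(2,1)] by auto
    moreover have "insert e g \<inter> S = g \<inter> S" for g
      using insert by auto
    ultimately show ?case
      using insert by (simp add: subset_expectation_insert algebra_simps)
  qed
  moreover have "finite (E - S)" "(E - S) \<inter> S = {}" "S \<union> (E - S) = E"
    using assms by auto
  ultimately show ?thesis
    by metis
qed

lemma subset_expectation_Un_mult:
  assumes "finite S" "finite T" "S \<inter> T = {}"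
  shows "subset_expectation p (S \<union> T) (\<lambda>g. F (g \<inter> S) * G (g \<inter> T)) =
    subset_expectation p S F * subset_expectation p T G"
  using assms(2,3)
proof (induction T arbitrary: G rule: finite_induct)
  case empty
  then show ?case
    by (simp add: subset_expectation_def subset_weight_def sum_distrib_left Int_absorb2 mult_ac)
next
  case (insert e T)
  have set_eqs: "S \<union> insert e T = insert e (S \<union> T)" "finite (S \<union> T)" "e \<notin> S \<union> T"
    using insert assms(1) by auto
  have disj: "S \<inter> T = {}"
    using insert.prems by auto
  have with_e: "subset_expectation p (S \<union> T) (\<lambda>g. F (insert e g \<inter> S) * G (insert e g \<inter> insert e T)) =
      subset_expectation p (S \<union> T) (\<lambda>g. F (g \<inter> S) * G (insert e (g \<inter> T)))"
    by (rule subset_expectation_cong) (use insert in auto)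
  have "g \<inter> insert e T = g \<inter> T" if "g \<subseteq> S \<union> T" for g
    using that set_eqs(3) by blast
  then have without_e: "subset_expectation p (S \<union> T) (\<lambda>g. F (g \<inter> S) * G (g \<inter> insert e T)) =
      subset_expectation p (S \<union> T) (\<lambda>g. F (g \<inter> S) * G (g \<inter> T))"
    by (intro subset_expectation_cong) simp
  show ?case
    unfolding set_eqs(1) subset_expectation_insert[OF set_eqs(2,3)] with_e without_e
      insert.IH[of G, OF disj] insert.IH[of "\<lambda>b. G (insert e b)", OF disj]
      subset_expectation_insert[OF insert.hyps(1,2)]
    by (simp add: algebra_simps)
qed

lemma subset_expectation_Int_mult:
  assumes "finite E" "S \<subseteq> E" "T \<subseteq> E" "S \<inter> T = {}"
  shows "subset_expectation p E (\<lambda>g. F (g \<inter> S) * G (g \<inter> T)) =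
    subset_expectation p S F * subset_expectation p T G"
proof -
  have "g \<inter> (S \<union> T) \<inter> S = g \<inter> S" "g \<inter> (S \<union> T) \<inter> T = g \<inter> T" for g
    by blast+
  then have "subset_expectation p E (\<lambda>g. F (g \<inter> S) * G (g \<inter> T)) =
      subset_expectation p E (\<lambda>g. (\<lambda>h. F (h \<inter> S) * G (h \<inter> T)) (g \<inter> (S \<union> T)))"
    by simp
  also have "\<dots> = subset_expectation p (S \<union> T) (\<lambda>h. F (h \<inter> S) * G (h \<inter> T))"
    using assms by (intro subset_expectation_Int) auto
  also have "\<dots> = subset_expectation p S F * subset_expectation p T G"
    using assms by (intro subset_expectation_Un_mult) (auto intro: finite_subset)
  finally show ?thesis .
qed

lemma subset_expectation_prod:
  assumes "finite I" "finite E" "\<And>i. i \<in> I \<Longrightarrow> P i \<subseteq> E"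
    "\<And>i j. i \<in> I \<Longrightarrow> j \<in> I \<Longrightarrow> i \<noteq> j \<Longrightarrow> P i \<inter> P j = {}"
  shows "subset_expectation p E (\<lambda>g. \<Prod>i\<in>I. F i (g \<inter> P i)) =
    (\<Prod>i\<in>I. subset_expectation p (P i) (F i))"
  using assms
proof (induction I arbitrary: E rule: finite_induct)
  case empty
  then show ?case by (simp add: subset_expectation_const)
next
  case (insert j I)
  let ?U = "\<Union>i\<in>I. P i"
  have U: "?U \<subseteq> E" "finite ?U" "P j \<inter> ?U = {}"
    using insert.prems insert.hyps(2) by (blast intro: finite_subset)+
  have "g \<inter> ?U \<inter> P i = g \<inter> P i" if "i \<in> I" for g i
    using that by auto
  then have "subset_expectation p E (\<lambda>g. \<Prod>i\<in>insert j I. F i (g \<inter> P i)) =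
      subset_expectation p E (\<lambda>g. F j (g \<inter> P j) * (\<lambda>h. \<Prod>i\<in>I. F i (h \<inter> P i)) (g \<inter> ?U))"
    using insert by simp
  also have "\<dots> = subset_expectation p (P j) (F j) *
      subset_expectation p ?U (\<lambda>h. \<Prod>i\<in>I. F i (h \<inter> P i))"
    using insert U by (intro subset_expectation_Int_mult) auto
  also have "subset_expectation p ?U (\<lambda>h. \<Prod>i\<in>I. F i (h \<inter> P i)) =
      (\<Prod>i\<in>I. subset_expectation p (P i) (F i))"
    by (rule insert.IH) (use U insert.prems in auto)
  also have "subset_expectation p (P j) (F j) * \<dots> =
      (\<Prod>i\<in>insert j I. subset_expectation p (P i) (F i))"
    using insert.hyps by simp
  finally show ?case .
qed

lemma subset_expectation_mem:
  assumes "finite E" "e \<in> E"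
  shows "subset_expectation p E (\<lambda>g. if e \<in> g then 1 else 0) = p"
proof -
  have "subset_expectation p E (\<lambda>g. if e \<in> g then 1 else 0) =
      subset_expectation p E (\<lambda>g. (\<lambda>h. if e \<in> h then 1 else 0) (g \<inter> {e}))"
    by simp
  also have "\<dots> = subset_expectation p {e} (\<lambda>h. if e \<in> h then 1 else 0)"
    using assms by (intro subset_expectation_Int) auto
  finally show ?thesis
    by (simp add: subset_expectation_insert)
qed

lemma subset_expectation_not_full:
  assumes "finite S"
  shows "subset_expectation p S (\<lambda>g. if g = S then 0 else 1) = 1 - p ^ card S"
proof -
  have "subset_expectation p S (\<lambda>g. if g = S then 0 else 1) =
      (\<Sum>g\<in>Pow S. subset_weight p S g - (if g = S then subset_weight p S g else 0))"
    unfolding subset_expectation_def by (intro sum.cong) auto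
  also have "\<dots> = subset_expectation p S (\<lambda>_. 1) - subset_weight p S S"
    using assms by (simp add: subset_expectation_def sum_subtractf)
  finally show ?thesis
    using assms by (simp add: subset_expectation_const subset_weight_def)
qed

definition binomial_weight :: "nat \<Rightarrow> real \<Rightarrow> nat \<Rightarrow> real" where
  "binomial_weight m p k = real (m choose k) * p ^ k * (1 - p) ^ (m - k)"

lemma subset_expectation_card:
  assumes "finite S"
  shows "subset_expectation p S (\<lambda>g. f (card g)) =
    (\<Sum>k\<le>card S. binomial_weight (card S) p k * f k)"
proof -
  have "subset_expectation p S (\<lambda>g. f (card g)) =
      (\<Sum>k\<le>card S. \<Sum>g\<in>{g\<in>Pow S. card g = k}. subset_weight p S g * f (card g))"
    unfolding subset_expectation_def
    by (rule sum.group[symmetric]) (use assms card_mono in auto)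
  also have "\<dots> = (\<Sum>k\<le>card S. binomial_weight (card S) p k * f k)"
  proof (intro sum.cong refl)
    fix k
    have "(\<Sum>g\<in>{g\<in>Pow S. card g = k}. subset_weight p S g * f (card g)) =
        real (card {g. g \<subseteq> S \<and> card g = k}) * (p ^ k * (1 - p) ^ (card S - k) * f k)"
      by (simp add: subset_weight_def)
    then show "(\<Sum>g\<in>{g\<in>Pow S. card g = k}. subset_weight p S g * f (card g)) =
        binomial_weight (card S) p k * f k"
      using n_subsets[OF assms, of k] by (simp add: binomial_weight_def)
  qed
  finally show ?thesis .
qed

lemma sum_binomial_weight: "(\<Sum>k\<le>m. binomial_weight m p k) = 1"
  using binomial_ring[of p "1 - p" m] by (simp add: binomial_weight_def)

lemma binomial_weight_nonneg: "0 \<le> p \<Longrightarrow> p \<le> 1 \<Longrightarrow> 0 \<le> binomial_weight m p k"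
  by (simp add: binomial_weight_def)

lemma binomial_weight_Suc_Suc:
  "binomial_weight (Suc m) p (Suc k) = binomial_weight m p k * (real (Suc m) * p) / real (Suc k)"
proof -
  have "real (Suc m choose Suc k) = real (m choose k) * real (Suc m) / real (Suc k)"
    using Suc_times_binomial[of k m] by (simp add: field_simps flip: of_nat_mult)
  then show ?thesis
    by (simp add: binomial_weight_def field_simps del: of_nat_Suc binomial_Suc_Suc)
qed

lemma sum_binomial_weight_div_Suc:
  assumes "0 < p"
  shows "(\<Sum>k\<le>m. binomial_weight m p k / real (Suc k)) = (1 - (1 - p) ^ Suc m) / (real (Suc m) * p)"
proof -
  have "(\<Sum>k\<le>m. binomial_weight m p k / real (Suc k)) * (real (Suc m) * p) =
      (\<Sum>k\<le>m. binomial_weight (Suc m) p (Suc k))"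
    by (simp add: sum_distrib_right binomial_weight_Suc_Suc)
  also have "\<dots> = (\<Sum>k\<le>Suc m. binomial_weight (Suc m) p k) - binomial_weight (Suc m) p 0"
    by (simp add: sum.atMost_Suc_shift del: sum.atMost_Suc)
  also have "\<dots> = 1 - (1 - p) ^ Suc m"
    unfolding sum_binomial_weight by (simp add: binomial_weight_def)
  finally show ?thesis
    using assms by (simp add: eq_divide_eq)
qed

lemma sum_binomial_weight_div_Suc_Suc_le:
  assumes "0 < p" "p \<le> 1"
  shows "(\<Sum>k\<le>m. binomial_weight m p k / (real (Suc k) * real (Suc (Suc k))))
    \<le> 1 / (real (Suc m) * real (Suc (Suc m)) * p ^ 2)"
proof -
  have c: "0 < real (Suc m) * real (Suc (Suc m)) * p ^ 2"
    using assms by simp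
  have "(\<Sum>k\<le>m. binomial_weight m p k / (real (Suc k) * real (Suc (Suc k)))) *
      (real (Suc m) * real (Suc (Suc m)) * p ^ 2) = (\<Sum>k\<le>m. binomial_weight (Suc (Suc m)) p (Suc (Suc k)))"
    unfolding sum_distrib_right
    by (intro sum.cong refl) (simp add: binomial_weight_Suc_Suc field_simps power2_eq_square)
  also have "\<dots> \<le> (\<Sum>k\<le>Suc (Suc m). binomial_weight (Suc (Suc m)) p k)"
    using binomial_weight_nonneg[OF _ assms(2)] assms(1)
    by (simp add: sum.atMost_Suc_shift del: sum.atMost_Suc)
  also have "\<dots> = 1"
    by (rule sum_binomial_weight)
  finally show ?thesis
    using c by (simp only: pos_le_divide_eq)
qed

text \<open>Since \<open>1 / 0 = 0\<close>, the sums \<open>\<Sum>k\<le>m. binomial_weight m p k / k\<close> below are \<open>E[1/X; X > 0]\<close>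
  for \<open>X ~ Bin(m, p)\<close>.\<close>

lemma sum_binomial_weight_div_le:
  assumes "0 < p" "p \<le> 1"
  shows "(\<Sum>k\<le>m. binomial_weight m p k / real k) \<le> 2 / (real (Suc m) * p)"
proof -
  have "binomial_weight m p k / real k \<le> 2 * (binomial_weight m p k / real (Suc k))" for k
  proof -
    have "1 / real k \<le> 2 / real (Suc k)"
      by (cases k) (simp_all add: divide_simps)
    from mult_left_mono[OF this binomial_weight_nonneg] show ?thesis
      using assms by (simp add: mult.commute)
  qed
  then have "(\<Sum>k\<le>m. binomial_weight m p k / real k) \<le> (\<Sum>k\<le>m. 2 * (binomial_weight m p k / real (Suc k)))"
    by (intro sum_mono)
  also have "\<dots> = 2 * ((1 - (1 - p) ^ Suc m) / (real (Suc m) * p))"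
    unfolding sum_distrib_left[symmetric] sum_binomial_weight_div_Suc[OF assms(1)] ..
  also have "\<dots> \<le> 2 / (real (Suc m) * p)"
    using assms by (simp add: divide_right_mono)
  finally show ?thesis .
qed

lemma sum_binomial_weight_div_le_sharp:
  assumes "0 < p" "p \<le> 1"
  shows "(\<Sum>k\<le>m. binomial_weight m p k / real k)
    \<le> 1 / (real (Suc m) * p) + 3 / (real (Suc m) * real (Suc (Suc m)) * p ^ 2)"
proof -
  have "binomial_weight m p k / real k \<le> binomial_weight m p k / real (Suc k) +
      3 * (binomial_weight m p k / (real (Suc k) * real (Suc (Suc k))))" for k
  proof -
    have "1 / real k \<le> 1 / real (Suc k) + 3 / (real (Suc k) * real (Suc (Suc k)))"
      by (cases k) (simp_all add: divide_simps, simp add: algebra_simps)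
    from mult_left_mono[OF this binomial_weight_nonneg] show ?thesis
      using assms by (simp add: algebra_simps)
  qed
  then have "(\<Sum>k\<le>m. binomial_weight m p k / real k) \<le> (\<Sum>k\<le>m. binomial_weight m p k / real (Suc k) +
      3 * (binomial_weight m p k / (real (Suc k) * real (Suc (Suc k)))))"
    by (intro sum_mono)
  also have "\<dots> = (\<Sum>k\<le>m. binomial_weight m p k / real (Suc k)) +
      3 * (\<Sum>k\<le>m. binomial_weight m p k / (real (Suc k) * real (Suc (Suc k))))"
    by (simp only: sum.distrib sum_distrib_left)
  also have "\<dots> \<le> 1 / (real (Suc m) * p) + 3 * (1 / (real (Suc m) * real (Suc (Suc m)) * p ^ 2))"
    unfolding sum_binomial_weight_div_Suc[OF assms(1)]
    using sum_binomial_weight_div_Suc_Suc_le[OF assms, of m] assms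
    by (intro add_mono mult_left_mono divide_right_mono) auto
  finally show ?thesis
    by simp
qed

lemma sum_binomial_weight_div_ge:
  assumes "0 < p" "p \<le> 1"
  shows "(\<Sum>k\<le>m. binomial_weight m p k / real k)
    \<ge> (1 - (1 - p) ^ Suc m) / (real (Suc m) * p) - (1 - p) ^ m"
proof -
  have "(1 - (1 - p) ^ Suc m) / (real (Suc m) * p) - (1 - p) ^ m =
      (\<Sum>k\<le>m. binomial_weight m p k / real (Suc k)) - binomial_weight m p 0"
    unfolding sum_binomial_weight_div_Suc[OF assms(1)] by (simp add: binomial_weight_def)
  also have "\<dots> = (\<Sum>k\<in>{1..m}. binomial_weight m p k / real (Suc k))"
    by (simp add: atMost_atLeast0 sum.atLeast_Suc_atMost)
  also have "\<dots> \<le> (\<Sum>k\<in>{1..m}. binomial_weight m p k / real k)"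
    using assms by (intro sum_mono divide_left_mono binomial_weight_nonneg) auto
  also have "\<dots> = (\<Sum>k\<le>m. binomial_weight m p k / real k)"
    by (simp add: atMost_atLeast0 sum.atLeast_Suc_atMost)
  finally show ?thesis .
qed

section \<open>Return times of the walk on a fixed graph\<close>

definition adj :: "nat set set \<Rightarrow> nat \<Rightarrow> nat \<Rightarrow> real" where
  "adj g u v = (if {u, v} \<in> g then 1 else 0)"

lemma adj_commute: "adj g u v = adj g v u"
  by (simp add: adj_def insert_commute)

lemma doubleton_mem_all_edges_iff: "{u, v} \<in> all_edges n \<longleftrightarrow> u \<in> {1..n} \<and> v \<in> {1..n} \<and> u \<noteq> v"
proof
  assume "{u, v} \<in> all_edges n"
  then obtain a b where "1 \<le> a" "a < b" "b \<le> n" "{u, v} = {a, b}"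
    unfolding all_edges_def by blast
  then show "u \<in> {1..n} \<and> v \<in> {1..n} \<and> u \<noteq> v"
    by (auto simp: doubleton_eq_iff)
next
  assume "u \<in> {1..n} \<and> v \<in> {1..n} \<and> u \<noteq> v"
  then have "1 \<le> min u v \<and> min u v < max u v \<and> max u v \<le> n \<and> {u, v} = {min u v, max u v}"
    by (auto simp: min_def max_def insert_commute)
  then show "{u, v} \<in> all_edges n"
    unfolding all_edges_def by blast
qed

lemma finite_all_edges: "finite (all_edges n)"
proof -
  have "all_edges n \<subseteq> Pow {1..n}"
    unfolding all_edges_def by auto
  then show ?thesis
    by (rule finite_subset) simp
qed

fun survival :: "nat set set \<Rightarrow> nat \<Rightarrow> nat \<Rightarrow> nat \<Rightarrow> real" where
  "survival g n 0 v = 1"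
| "survival g n (Suc t) v = (\<Sum>x\<in>{2..n}. walk_step g v x * survival g n t x)"

lemma sum_paths_eq_survival:
  "(\<Sum>xs\<in>{xs. length xs = t \<and> set xs \<subseteq> {2..n}}. \<Prod>i<t. walk_step g ((a # xs) ! i) (xs ! i)) =
    survival g n t a"
proof (induction t arbitrary: a)
  case 0
  have "{xs. length xs = 0 \<and> set xs \<subseteq> {2..n}} = {[]}"
    by auto
  then show ?case
    by simp
next
  case (Suc t)
  let ?L = "\<lambda>t. {xs. length xs = t \<and> set xs \<subseteq> {2..n}}"
  have lists: "?L (Suc t) = (\<lambda>(x, ys). x # ys) ` ({2..n} \<times> ?L t)"
    by (auto simp: length_Suc_conv image_iff)
  have inj: "inj_on (\<lambda>(x, ys). x # ys) ({2..n} \<times> ?L t)"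
    by (auto simp: inj_on_def)
  have "(\<Sum>xs\<in>?L (Suc t). \<Prod>i<Suc t. walk_step g ((a # xs) ! i) (xs ! i)) =
      (\<Sum>(x, ys)\<in>{2..n} \<times> ?L t. \<Prod>i<Suc t. walk_step g ((a # x # ys) ! i) ((x # ys) ! i))"
    unfolding lists by (subst sum.reindex[OF inj]) (simp add: case_prod_beta)
  also have "\<dots> = (\<Sum>(x, ys)\<in>{2..n} \<times> ?L t.
      walk_step g a x * (\<Prod>i<t. walk_step g ((x # ys) ! i) (ys ! i)))"
    by (intro sum.cong refl) (auto simp del: prod.lessThan_Suc simp add: prod.lessThan_Suc_shift)
  also have "\<dots> = (\<Sum>x\<in>{2..n}. walk_step g a x * survival g n t x)"
    by (simp add: sum.cartesian_product[symmetric] sum_distrib_left[symmetric] Suc.IH)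
  finally show ?case
    by simp
qed

lemma surv_prob_eq_survival: "surv_prob n g t = survival g n t 1"
  unfolding surv_prob_def by (rule sum_paths_eq_survival)

text \<open>For \<open>deg 1 > 0\<close>, \<open>kac_time g n = (\<Sum>x\<in>{1..n}. deg x) / deg 1 = 2 |g| / deg 1\<close>, the mean
  return time to 1 given by Kac's formula when \<open>g\<close> is connected; in general it only bounds the
  mean return time from above.\<close>

definition kac_time :: "nat set set \<Rightarrow> nat \<Rightarrow> real" where
  "kac_time g n = (if deg g 1 = 0 then 1 else 1 + (\<Sum>x\<in>{2..n}. real (deg g x)) / real (deg g 1))"

definition mean_return_time :: "nat set set \<Rightarrow> nat \<Rightarrow> real" where
  "mean_return_time g n = (if deg g 1 = 0 then 1 else (\<Sum>t. survival g n t 1))"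

definition within_two :: "nat set set \<Rightarrow> nat \<Rightarrow> bool" where
  "within_two g n \<longleftrightarrow> (\<forall>v\<in>{2..n}. {1, v} \<in> g \<or> (\<exists>w\<in>{2..n}. {v, w} \<in> g \<and> {w, 1} \<in> g))"

context
  fixes g :: "nat set set" and n :: nat
  assumes graph: "g \<subseteq> all_edges n"
begin

lemma edge_memD:
  assumes "{u, v} \<in> g"
  shows "u \<in> {1..n}" "v \<in> {1..n}" "u \<noteq> v"
  using assms graph doubleton_mem_all_edges_iff by blast+

lemma adj_self: "adj g v v = 0"
  using edge_memD[of v v] by (auto simp: adj_def)

lemma deg_eq_sum_adj: "real (deg g v) = (\<Sum>u\<in>{1..n}. adj g v u)"
proof -
  have nbrs: "{u. {v, u} \<in> g} \<subseteq> {1..n}"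
    using edge_memD by blast
  have "(\<Sum>u\<in>{1..n}. adj g v u) = real (card ({1..n} \<inter> {u. {v, u} \<in> g}))"
    by (simp add: adj_def sum.If_cases)
  also have "{1..n} \<inter> {u. {v, u} \<in> g} = {u. {v, u} \<in> g}"
    using nbrs by blast
  finally show ?thesis
    by (simp add: deg_def)
qed

lemma deg_le: "deg g v \<le> n"
  unfolding deg_def using card_mono[of "{1..n}" "{u. {v, u} \<in> g}"] edge_memD by fastforce

lemma deg_pos:
  assumes "{v, u} \<in> g"
  shows "0 < deg g v"
proof -
  have "finite {u. {v, u} \<in> g}"
    using edge_memD by (auto intro: finite_subset[of _ "{1..n}"])
  then show ?thesis
    using assms by (auto simp: deg_def card_gt_0_iff)
qed

lemma deg_mult_walk_step: "real (deg g v) * walk_step g v x = adj g v x"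
  using deg_pos[of v x] by (auto simp: walk_step_def adj_def)

lemma walk_step_nonneg: "0 \<le> walk_step g v x"
  by (simp add: walk_step_def)

lemma walk_step_ge:
  assumes "{v, w} \<in> g"
  shows "1 / real n \<le> walk_step g v w"
  using assms deg_pos[OF assms] deg_le[of v] by (simp add: walk_step_def frac_le)

context
  assumes one_le_n: "1 \<le> n"
begin

lemma atLeastAtMost_one_eq: "{1..n} = insert 1 {2..n}"
  using one_le_n by auto

lemma sum_adj_avoid_one: "(\<Sum>x\<in>{2..n}. adj g v x) = real (deg g v) - adj g v 1"
  unfolding deg_eq_sum_adj atLeastAtMost_one_eq by simp

lemma sum_walk_step_avoid_one:
  "(\<Sum>x\<in>{2..n}. walk_step g v x) = (if deg g v = 0 then 0 else 1) - walk_step g v 1"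
proof (cases "deg g v = 0")
  case True
  then have "walk_step g v x = 0" for x
    using deg_pos[of v x] by (auto simp: walk_step_def)
  then show ?thesis
    using True by simp
next
  case False
  then have "(\<Sum>x\<in>{2..n}. walk_step g v x) = (\<Sum>x\<in>{2..n}. adj g v x) / real (deg g v)"
    unfolding sum_divide_distrib by (intro sum.cong) (simp_all add: walk_step_def adj_def)
  also have "\<dots> = (real (deg g v) - adj g v 1) / real (deg g v)"
    by (simp only: sum_adj_avoid_one)
  finally show ?thesis
    using False by (simp add: walk_step_def adj_def diff_divide_distrib)
qed

lemma sum_walk_step_avoid_one_le: "(\<Sum>x\<in>{2..n}. walk_step g v x) \<le> 1"
  using sum_walk_step_avoid_one[of v] walk_step_nonneg[of v 1] by auto

lemma survival_bounds: "0 \<le> survival g n t v \<and> survival g n t v \<le> 1"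
proof (induction t arbitrary: v)
  case 0
  then show ?case
    by simp
next
  case (Suc t)
  have "(\<Sum>x\<in>{2..n}. walk_step g v x * survival g n t x) \<le> (\<Sum>x\<in>{2..n}. walk_step g v x)"
    using Suc walk_step_nonneg by (intro sum_mono) (simp add: mult_left_le)
  then show ?case
    using sum_walk_step_avoid_one_le[of v] Suc walk_step_nonneg
    by (auto intro!: sum_nonneg)
qed

lemma survival_Suc_le: "survival g n (Suc t) v \<le> survival g n t v"
proof (induction t arbitrary: v)
  case 0
  then show ?case
    using survival_bounds[of 1 v] by simp
next
  case (Suc t)
  then show ?case
    unfolding survival.simps(2)[of g n "Suc t"] survival.simps(2)[of g n t]
    by (intro sum_mono mult_left_mono) (simp_all add: walk_step_nonneg)
qed

text \<open>Reversibility: \<open>deg x \<cdot> walk_step x y = adj x y\<close> is symmetric, so at each step the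
  degree-weighted survival mass lost by the vertices \<open>2..n\<close> is the survival of the walk from 1,
  weighted by \<open>deg 1\<close>.\<close>

lemma survival_telescope:
  "real (deg g 1) * (\<Sum>t<T. survival g n (Suc t) 1) =
    (\<Sum>x\<in>{2..n}. real (deg g x) * (1 - survival g n T x))"
proof (induction T)
  case 0
  then show ?case
    by simp
next
  case (Suc T)
  have from_one: "real (deg g 1) * survival g n (Suc T) 1 = (\<Sum>x\<in>{2..n}. adj g x 1 * survival g n T x)"
    by (simp add: sum_distrib_left mult.assoc[symmetric] deg_mult_walk_step adj_commute)
  have "(\<Sum>x\<in>{2..n}. real (deg g x) * survival g n (Suc T) x) =
      (\<Sum>x\<in>{2..n}. \<Sum>y\<in>{2..n}. adj g x y * survival g n T y)"
    by (simp add: sum_distrib_left mult.assoc[symmetric] deg_mult_walk_step)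
  also have "\<dots> = (\<Sum>y\<in>{2..n}. (real (deg g y) - adj g y 1) * survival g n T y)"
    by (subst sum.swap)
      (simp add: adj_commute sum_distrib_right[symmetric] sum_adj_avoid_one)
  finally have from_rest: "(\<Sum>x\<in>{2..n}. real (deg g x) * survival g n (Suc T) x) =
      (\<Sum>x\<in>{2..n}. real (deg g x) * survival g n T x) - (\<Sum>x\<in>{2..n}. adj g x 1 * survival g n T x)"
    by (simp add: left_diff_distrib sum_subtractf)
  show ?case
    using Suc from_one from_rest by (simp add: distrib_left right_diff_distrib sum_subtractf)
qed

context
  assumes deg_one: "deg g 1 \<noteq> 0"
begin

lemma sum_survival_lessThan:
  "(\<Sum>t<Suc T. survival g n t 1) = 1 + (\<Sum>x\<in>{2..n}. real (deg g x) * (1 - survival g n T x)) / real (deg g 1)"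
  using survival_telescope[of T] deg_one by (simp add: sum.lessThan_Suc_shift del: sum.lessThan_Suc) (simp add: field_simps)

lemma sum_survival_lessThan_le: "(\<Sum>t<T. survival g n t 1) \<le> kac_time g n"
proof -
  have "(\<Sum>t<T. survival g n t 1) \<le> (\<Sum>t<Suc T. survival g n t 1)"
    using survival_bounds[of T 1] by simp
  also have "\<dots> \<le> 1 + (\<Sum>x\<in>{2..n}. real (deg g x)) / real (deg g 1)"
    unfolding sum_survival_lessThan
    by (intro add_left_mono divide_right_mono sum_mono) (use survival_bounds in \<open>auto simp: mult_left_le\<close>)
  finally show ?thesis
    using deg_one by (simp add: kac_time_def)
qed

lemma summable_survival: "summable (\<lambda>t. survival g n t 1)"
  using survival_bounds sum_survival_lessThan_le by (intro summableI_nonneg_bounded) auto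

lemma one_le_suminf_survival: "1 \<le> (\<Sum>t. survival g n t 1)"
  using sum_le_suminf[OF summable_survival, of "{0}"] survival_bounds by simp

end

lemma survival_add_le:
  assumes "0 \<le> c" "\<And>x. x \<in> {2..n} \<Longrightarrow> survival g n t x \<le> c" "v \<in> {2..n}"
  shows "survival g n (k + t) v \<le> survival g n k v * c"
  using assms(3)
proof (induction k arbitrary: v)
  case 0
  then show ?case
    using assms(2) by simp
next
  case (Suc k)
  have "survival g n (Suc k + t) v \<le> (\<Sum>x\<in>{2..n}. walk_step g v x * (survival g n k x * c))"
    using Suc.IH walk_step_nonneg by (auto intro!: sum_mono mult_left_mono)
  also have "\<dots> = survival g n (Suc k) v * c"
    by (simp add: sum_distrib_right mult.assoc)
  finally show ?case .
qed

lemma survival_one_le: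
  assumes "{v, 1} \<in> g"
  shows "survival g n 1 v \<le> 1 - 1 / real n"
proof -
  have "survival g n 1 v = 1 - walk_step g v 1"
    using sum_walk_step_avoid_one[of v] deg_pos[OF assms] by simp
  then show ?thesis
    using walk_step_ge[OF assms] by simp
qed

lemma survival_two_le:
  assumes "within_two g n" "v \<in> {2..n}"
  shows "survival g n 2 v \<le> 1 - 1 / real n ^ 2"
proof -
  have "1 - 1 / real n \<le> 1 - 1 / real n ^ 2"
    using one_le_n by (simp add: power2_eq_square frac_le)
  from assms consider "{1, v} \<in> g" | w where "w \<in> {2..n}" "{v, w} \<in> g" "{w, 1} \<in> g"
    unfolding within_two_def by blast
  then show ?thesis
  proof cases
    case 1
    then have "survival g n 1 v \<le> 1 - 1 / real n"
      by (intro survival_one_le) (simp add: insert_commute)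
    moreover have "survival g n 2 v \<le> survival g n 1 v"
      using survival_Suc_le[of 1 v] by (simp add: numeral_2_eq_2)
    ultimately show ?thesis
      using \<open>1 - 1 / real n \<le> 1 - 1 / real n ^ 2\<close> by linarith
  next
    case 2
    have "walk_step g v w * (1 - survival g n 1 w) \<le> (\<Sum>x\<in>{2..n}. walk_step g v x * (1 - survival g n 1 x))"
      using 2 survival_bounds walk_step_nonneg
      by (intro member_le_sum) (auto simp del: survival.simps)
    moreover have "(1 / real n) * (1 / real n) \<le> walk_step g v w * (1 - survival g n 1 w)"
      using walk_step_ge[OF 2(2)] survival_one_le[OF 2(3)] walk_step_nonneg one_le_n
      by (intro mult_mono) auto
    moreover have "survival g n 2 v =
        (\<Sum>x\<in>{2..n}. walk_step g v x) - (\<Sum>x\<in>{2..n}. walk_step g v x * (1 - survival g n 1 x))"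
      by (simp add: numeral_2_eq_2 sum_subtractf[symmetric] algebra_simps)
    ultimately show ?thesis
      using sum_walk_step_avoid_one_le[of v] by (simp add: power2_eq_square)
  qed
qed

lemma survival_even_le:
  assumes "within_two g n" "v \<in> {2..n}"
  shows "survival g n (2 * j) v \<le> (1 - 1 / real n ^ 2) ^ j"
  using assms(2)
proof (induction j arbitrary: v)
  case 0
  then show ?case
    by simp
next
  case (Suc j)
  have r: "0 \<le> (1 - 1 / real n ^ 2) ^ j"
    using one_le_n by (simp add: field_simps)
  have "survival g n (2 + 2 * j) v \<le> survival g n 2 v * (1 - 1 / real n ^ 2) ^ j"
    using Suc by (intro survival_add_le r)
  also have "\<dots> \<le> (1 - 1 / real n ^ 2) * (1 - 1 / real n ^ 2) ^ j"
    using survival_two_le[OF assms(1) Suc.prems] r by (rule mult_right_mono)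
  finally show ?case
    by simp
qed

context
  assumes two_le_n: "2 \<le> n"
begin

lemma within_two_deg_one:
  assumes "within_two g n"
  shows "deg g 1 \<noteq> 0"
proof -
  have "2 \<in> {2..n}"
    using two_le_n by simp
  then consider "{1, 2} \<in> g" | w where "{w, 1} \<in> g"
    using assms unfolding within_two_def by blast
  then show ?thesis
  proof cases
    case 1
    then show ?thesis
      using deg_pos by fastforce
  next
    case 2
    then have "{1, w} \<in> g"
      by (simp add: insert_commute)
    then show ?thesis
      using deg_pos by fastforce
  qed
qed

lemma suminf_survival_eq_kac_time:
  assumes "within_two g n"
  shows "(\<Sum>t. survival g n t 1) = kac_time g n"
proof (rule antisym)
  note deg_one = within_two_deg_one[OF assms]
  show "(\<Sum>t. survival g n t 1) \<le> kac_time g n"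
    by (rule suminf_le_const[OF summable_survival[OF deg_one]])
      (rule sum_survival_lessThan_le[OF deg_one])
  define r where "r = 1 - 1 / real n ^ 2"
  have r: "0 \<le> r" "r < 1"
    using one_le_n by (auto simp: r_def field_simps)
  let ?X = "\<lambda>j. 1 + (\<Sum>x\<in>{2..n}. real (deg g x) * (1 - r ^ j)) / real (deg g 1)"
  have "?X \<longlonglongrightarrow> 1 + (\<Sum>x\<in>{2..n}. real (deg g x) * (1 - 0)) / real (deg g 1)"
    using r deg_one by (intro tendsto_intros LIMSEQ_realpow_zero) auto
  moreover have "?X j \<le> (\<Sum>t. survival g n t 1)" for j
  proof -
    have "?X j \<le> 1 + (\<Sum>x\<in>{2..n}. real (deg g x) * (1 - survival g n (2 * j) x)) / real (deg g 1)"
      by (intro add_left_mono divide_right_mono sum_mono mult_left_mono)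
        (use survival_even_le[OF assms] in \<open>auto simp: r_def\<close>)
    also have "\<dots> = (\<Sum>t<Suc (2 * j). survival g n t 1)"
      by (rule sum_survival_lessThan[OF deg_one, symmetric])
    also have "\<dots> \<le> (\<Sum>t. survival g n t 1)"
      using survival_bounds
      by (intro sum_le_suminf[OF summable_survival[OF deg_one]]) auto
    finally show ?thesis .
  qed
  ultimately have "1 + (\<Sum>x\<in>{2..n}. real (deg g x) * (1 - 0)) / real (deg g 1) \<le> (\<Sum>t. survival g n t 1)"
    by (intro LIMSEQ_le_const2) auto
  then show "kac_time g n \<le> (\<Sum>t. survival g n t 1)"
    using deg_one by (simp add: kac_time_def)
qed

lemma mean_return_time_eq_kac_time:
  assumes "within_two g n"
  shows "mean_return_time g n = kac_time g n"
  using suminf_survival_eq_kac_time[OF assms] within_two_deg_one[OF assms]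
  by (simp add: mean_return_time_def)

end

lemma exp_return_eq_mean_return_time: "exp_return n g = ennreal (mean_return_time g n)"
proof (cases "deg g 1 = 0")
  case False
  then have "(\<Sum>t. ennreal (survival g n t 1)) = ennreal (\<Sum>t. survival g n t 1)"
    using survival_bounds summable_survival
    by (intro suminf_ennreal2) auto
  then show ?thesis
    using False by (simp add: exp_return_def mean_return_time_def surv_prob_eq_survival)
qed (simp add: exp_return_def mean_return_time_def)

lemma one_le_mean_return_time: "1 \<le> mean_return_time g n"
  using one_le_suminf_survival by (simp add: mean_return_time_def)

lemma mean_return_time_le_kac_time: "mean_return_time g n \<le> kac_time g n"
  using suminf_le_const[OF summable_survival sum_survival_lessThan_le]
  by (simp add: mean_return_time_def kac_time_def)

lemma kac_time_le_square: "kac_time g n \<le> real n ^ 2"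
proof (cases "deg g 1 = 0")
  case True
  then show ?thesis
    using one_le_n by (simp add: kac_time_def)
next
  case False
  have "(\<Sum>x\<in>{2..n}. real (deg g x)) / real (deg g 1) \<le> (\<Sum>x\<in>{2..n}. real (deg g x)) / 1"
    using False by (intro divide_left_mono sum_nonneg) auto
  also have "\<dots> \<le> (\<Sum>x\<in>{2..n}. real n)"
    unfolding div_by_1 using deg_le by (intro sum_mono) auto
  also have "\<dots> = real n * real n - real n"
    using one_le_n by (simp add: of_nat_diff algebra_simps)
  finally show ?thesis
    using False one_le_n by (simp add: kac_time_def power2_eq_square)
qed

end

end

section \<open>Averaging over \<open>G(n, p)\<close>\<close>

definition edges_at_one :: "nat \<Rightarrow> nat set set" where
  "edges_at_one n = (\<lambda>u. {1, u}) ` {2..n}"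

definition edges_off_one :: "nat \<Rightarrow> nat set set" where
  "edges_off_one n = all_edges n - edges_at_one n"

definition inner_degree_sum :: "nat \<Rightarrow> nat set set \<Rightarrow> real" where
  "inner_degree_sum n g = (\<Sum>x\<in>{2..n}. \<Sum>u\<in>{2..n}. adj g x u)"

lemma edges_at_one_subset: "edges_at_one n \<subseteq> all_edges n"
  by (auto simp: edges_at_one_def doubleton_mem_all_edges_iff)

lemma card_edges_at_one: "card (edges_at_one n) = n - 1"
proof -
  have "inj_on (\<lambda>u. {1::nat, u}) {2..n}"
    by (auto simp: inj_on_def doubleton_eq_iff)
  then show ?thesis
    by (simp add: edges_at_one_def card_image)
qed

context
  fixes g :: "nat set set" and n :: nat
  assumes graph: "g \<subseteq> all_edges n"
begin

lemma deg_one_eq_card: "deg g 1 = card (g \<inter> edges_at_one n)"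
proof -
  have "g \<inter> edges_at_one n = (\<lambda>u. {1, u}) ` {u. {1, u} \<in> g}"
    using edge_memD[OF graph, of 1] by (force simp: edges_at_one_def)
  moreover have "inj_on (\<lambda>u. {1::nat, u}) {u. {1, u} \<in> g}"
    by (auto simp: inj_on_def doubleton_eq_iff)
  ultimately show ?thesis
    by (simp add: deg_def card_image)
qed

lemma inner_degree_sum_Int_edges_off_one: "inner_degree_sum n (g \<inter> edges_off_one n) = inner_degree_sum n g"
proof -
  have "adj (g \<inter> edges_off_one n) x u = adj g x u" if "x \<in> {2..n}" "u \<in> {2..n}" for x u
    using that graph by (auto simp: adj_def edges_off_one_def edges_at_one_def doubleton_eq_iff)
  then show ?thesis
    by (simp add: inner_degree_sum_def)
qed

lemma kac_time_eq:
  assumes "1 \<le> n"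
  shows "kac_time g n = (if card (g \<inter> edges_at_one n) = 0 then 1 else 2) +
    inner_degree_sum n (g \<inter> edges_off_one n) / real (card (g \<inter> edges_at_one n))"
proof -
  have "(\<Sum>x\<in>{2..n}. real (deg g x)) = (\<Sum>x\<in>{2..n}. adj g 1 x + (\<Sum>u\<in>{2..n}. adj g x u))"
    using sum_adj_avoid_one[OF graph assms] by (simp add: adj_commute)
  also have "\<dots> = real (deg g 1) + inner_degree_sum n g"
    using sum_adj_avoid_one[OF graph assms, of 1] adj_self[OF graph]
    by (simp add: sum.distrib inner_degree_sum_def)
  finally have "(\<Sum>x\<in>{2..n}. real (deg g x)) =
      real (card (g \<inter> edges_at_one n)) + inner_degree_sum n (g \<inter> edges_off_one n)"
    unfolding deg_one_eq_card inner_degree_sum_Int_edges_off_one .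
  then show ?thesis
    unfolding kac_time_def deg_one_eq_card by (simp add: field_simps)
qed

end

lemma subset_expectation_inner_degree_sum:
  assumes "2 \<le> n"
  shows "subset_expectation p (all_edges n) (inner_degree_sum n) = real (n - 1) * real (n - 2) * p"
proof -
  have adj_expectation: "subset_expectation p (all_edges n) (\<lambda>g. adj g x u) = (if x = u then 0 else p)"
    if "x \<in> {2..n}" "u \<in> {2..n}" for x u
  proof (cases "x = u")
    case True
    then show ?thesis
      using adj_self by (simp add: subset_expectation_def)
  next
    case False
    then have "{x, u} \<in> all_edges n"
      using that by (simp add: doubleton_mem_all_edges_iff)
    then show ?thesis
      using False subset_expectation_mem[OF finite_all_edges] by (simp add: adj_def)
  qed
  have "subset_expectation p (all_edges n) (inner_degree_sum n) =
      (\<Sum>x\<in>{2..n}. \<Sum>u\<in>{2..n}. if x = u then 0 else p)"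
    unfolding inner_degree_sum_def[abs_def] subset_expectation_sum
    using adj_expectation by (intro sum.cong refl) auto
  also have "\<dots> = (\<Sum>x\<in>{2..n}. real (n - 2) * p)"
  proof (intro sum.cong refl)
    fix x
    assume "x \<in> {2..n}"
    have "(\<Sum>u\<in>{2..n}. if x = u then 0 else p) = (\<Sum>u\<in>{2..n}. p - (if x = u then p else 0))"
      by (intro sum.cong) auto
    also have "\<dots> = real (n - 2) * p"
      using \<open>x \<in> {2..n}\<close> by (simp add: sum_subtractf of_nat_diff algebra_simps)
    finally show "(\<Sum>u\<in>{2..n}. if x = u then 0 else p) = real (n - 2) * p" .
  qed
  also have "\<dots> = real (n - 1) * real (n - 2) * p"
    using assms by (simp add: of_nat_diff)
  finally show ?thesis .
qed

definition mean_kac_time :: "nat \<Rightarrow> real \<Rightarrow> real" where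
  "mean_kac_time n p = subset_expectation p (all_edges n) (\<lambda>g. kac_time g n)"

text \<open>The degree of 1 is \<open>card (g \<inter> edges_at_one n) ~ Bin(n - 1, p)\<close>, independent of
  \<open>g \<inter> edges_off_one n\<close>, which alone determines \<open>inner_degree_sum\<close>.\<close>

lemma mean_kac_time_eq:
  assumes "2 \<le> n"
  shows "mean_kac_time n p = (\<Sum>k\<le>n - 1. binomial_weight (n - 1) p k * (if k = 0 then 1 else 2)) +
    (\<Sum>k\<le>n - 1. binomial_weight (n - 1) p k / real k) * (real (n - 1) * real (n - 2) * p)"
proof -
  let ?E = "all_edges n" and ?S = "edges_at_one n" and ?T = "edges_off_one n"
  have S: "finite ?S" "?S \<subseteq> ?E" "card ?S = n - 1"
    using edges_at_one_subset[of n] finite_subset[OF edges_at_one_subset finite_all_edges]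
      card_edges_at_one by auto
  have T: "?T \<subseteq> ?E" "?S \<inter> ?T = {}"
    by (auto simp: edges_off_one_def)
  have "mean_kac_time n p =
      subset_expectation p ?E (\<lambda>g. if card (g \<inter> ?S) = 0 then 1 else 2) +
      subset_expectation p ?E (\<lambda>g. 1 / real (card (g \<inter> ?S)) * inner_degree_sum n (g \<inter> ?T))"
    unfolding mean_kac_time_def subset_expectation_add[symmetric]
    using assms by (intro subset_expectation_cong) (simp add: kac_time_eq)
  also have "\<dots> = subset_expectation p ?S (\<lambda>a. if card a = 0 then 1 else 2) +
      subset_expectation p ?S (\<lambda>a. 1 / real (card a)) * subset_expectation p ?T (inner_degree_sum n)"
    unfolding subset_expectation_Int[OF finite_all_edges S(2), of p "\<lambda>a. if card a = 0 then 1 else 2"]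
      subset_expectation_Int_mult[OF finite_all_edges S(2) T, of p "\<lambda>a. 1 / real (card a)" "inner_degree_sum n"] ..
  also have "subset_expectation p ?T (inner_degree_sum n) =
      subset_expectation p ?E (\<lambda>g. inner_degree_sum n (g \<inter> ?T))"
    using T finite_all_edges by (simp add: subset_expectation_Int)
  also have "\<dots> = real (n - 1) * real (n - 2) * p"
    using assms by (simp add: inner_degree_sum_Int_edges_off_one subset_expectation_inner_degree_sum
        cong: subset_expectation_cong)
  finally show ?thesis
    unfolding subset_expectation_card[OF S(1), of p "\<lambda>k. if k = 0 then 1 else 2"]
      subset_expectation_card[OF S(1), of p "\<lambda>k. 1 / real k"] S(3) by simp
qed

lemma sum_binomial_weight_degree_factor_le:
  assumes "0 \<le> p" "p \<le> 1"
  shows "(\<Sum>k\<le>m. binomial_weight m p k * (if k = 0 then 1 else 2)) \<le> 2"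
proof -
  have "(\<Sum>k\<le>m. binomial_weight m p k * (if k = 0 then 1 else 2)) \<le> (\<Sum>k\<le>m. binomial_weight m p k * 2)"
    using assms by (intro sum_mono mult_left_mono binomial_weight_nonneg) auto
  then show ?thesis
    by (simp add: sum_distrib_right[symmetric] sum_binomial_weight)
qed

context
  fixes n :: nat and p :: real
  assumes two_le_n: "2 \<le> n" and p: "0 < p" "p \<le> 1"
begin

lemma mean_kac_time_le_linear: "mean_kac_time n p \<le> 2 * real n"
proof -
  have "(\<Sum>k\<le>n - 1. binomial_weight (n - 1) p k / real k) * (real (n - 1) * real (n - 2) * p)
      \<le> 2 / (real n * p) * (real (n - 1) * real (n - 2) * p)"
    using sum_binomial_weight_div_le[OF p, of "n - 1"] two_le_n p by (intro mult_right_mono) auto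
  also have "\<dots> = 2 * real (n - 2) * (real (n - 1) / real n)"
    using p by (simp add: field_simps)
  also have "\<dots> \<le> 2 * real (n - 2)"
    using two_le_n by (intro mult_left_le) (auto simp: divide_le_eq)
  finally show ?thesis
    using mean_kac_time_eq[OF two_le_n, of p] sum_binomial_weight_degree_factor_le[of p "n - 1"] p two_le_n
    by (simp add: of_nat_diff)
qed

lemma mean_kac_time_le: "mean_kac_time n p \<le> real n + 2 + 3 / p"
proof -
  define d where "d = real (n - 1) * real (n - 2)"
  have "(\<Sum>k\<le>n - 1. binomial_weight (n - 1) p k / real k) * (d * p)
      \<le> (1 / (real n * p) + 3 / (real n * real (Suc n) * p ^ 2)) * (d * p)"
    using sum_binomial_weight_div_le_sharp[OF p, of "n - 1"] two_le_n p
    by (intro mult_right_mono) (auto simp: d_def)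
  also have "\<dots> = d / real n + 3 / p * (d / (real n * real (Suc n)))"
  proof -
    have "(1 / (a * p) + 3 / (a * b * p ^ 2)) * (d * p) = d / a + 3 / p * (d / (a * b))"
      if "0 < a" "0 < b" for a b :: real
      using that p by (simp add: field_simps power2_eq_square)
    then show ?thesis
      using two_le_n by simp
  qed
  also have "\<dots> \<le> real n + 3 / p * 1"
  proof (intro add_mono mult_left_mono)
    have "d \<le> real n * real n" "d \<le> real n * real (Suc n)"
      by (auto simp: d_def intro!: mult_mono)
    then show "d / real n \<le> real n" "d / (real n * real (Suc n)) \<le> 1"
      using two_le_n by (simp_all add: divide_le_eq)
  qed (use p in auto)
  finally show ?thesis
    using mean_kac_time_eq[OF two_le_n, of p] sum_binomial_weight_degree_factor_le[of p "n - 1"] p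
    by (simp add: d_def mult.assoc)
qed

lemma mean_kac_time_ge:
  "real (n - 1) * real (n - 2) / real n - real n ^ 2 * (1 - p) ^ (n - 2) \<le> mean_kac_time n p"
proof -
  define q where "q = 1 - p"
  define d where "d = real (n - 1) * real (n - 2)"
  have q: "0 \<le> q" "q \<le> 1" "p + q = 1"
    using p by (auto simp: q_def)
  have d: "0 \<le> d" "d \<le> real n ^ 2"
    using two_le_n by (auto simp: d_def power2_eq_square intro!: mult_mono)
  obtain m where m: "n = m + 2"
    using two_le_n by (metis le_add_diff_inverse2)
  have q_pow: "q ^ n = q ^ (n - 1) * q" "q ^ (n - 1) = q ^ (n - 2) * q"
    by (simp_all add: m numeral_2_eq_2 mult_ac)
  have "d / real n \<le> d / 1"
    using d two_le_n by (intro divide_left_mono) auto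
  then have "d / real n * q ^ n + d * p * q ^ (n - 1) \<le> d * q ^ n + d * p * q ^ (n - 1)"
    using q by (intro add_right_mono mult_right_mono) auto
  also have "\<dots> = d * q ^ (n - 1) * (q + p)"
    by (simp add: q_pow(1) algebra_simps)
  also have "\<dots> = d * q ^ (n - 1)"
    using q(3) by (simp add: add.commute)
  also have "\<dots> \<le> real n ^ 2 * q ^ (n - 2)"
    using d q by (intro mult_mono power_decreasing) auto
  finally have error_le: "d / real n * q ^ n + d * p * q ^ (n - 1) \<le> real n ^ 2 * q ^ (n - 2)" .
  have "((1 - q ^ n) / (real n * p) - q ^ (n - 1)) * (d * p) \<le>
      (\<Sum>k\<le>n - 1. binomial_weight (n - 1) p k / real k) * (d * p)"
    using sum_binomial_weight_div_ge[OF p, of "n - 1"] two_le_n d p by (intro mult_right_mono) (auto simp: q_def)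
  moreover have "((1 - q ^ n) / (real n * p) - q ^ (n - 1)) * (d * p) =
      d / real n - (d / real n * q ^ n + d * p * q ^ (n - 1))"
    using p two_le_n by (simp add: field_simps)
  moreover have "0 \<le> (\<Sum>k\<le>n - 1. binomial_weight (n - 1) p k * (if k = 0 then 1 else 2))"
    using p by (intro sum_nonneg mult_nonneg_nonneg binomial_weight_nonneg) auto
  ultimately show ?thesis
    using mean_kac_time_eq[OF two_le_n, of p] error_le by (simp add: d_def q_def mult.assoc)
qed

end

definition two_path :: "nat \<Rightarrow> nat \<Rightarrow> nat set set" where
  "two_path v w = {{v, w}, {w, 1}}"

definition no_two_path :: "nat \<Rightarrow> nat \<Rightarrow> nat set set \<Rightarrow> real" where
  "no_two_path n v g = (\<Prod>w\<in>{2..n} - {v}. if g \<inter> two_path v w = two_path v w then 0 else 1)"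

lemma no_two_path_nonneg: "0 \<le> no_two_path n v g"
  unfolding no_two_path_def by (intro prod_nonneg) auto

lemma not_within_two_le_sum_no_two_path:
  assumes "\<not> within_two g n"
  shows "1 \<le> (\<Sum>v\<in>{2..n}. no_two_path n v g)"
proof -
  obtain v where v: "v \<in> {2..n}" "{1, v} \<notin> g" "\<not> (\<exists>w\<in>{2..n}. {v, w} \<in> g \<and> {w, 1} \<in> g)"
    using assms unfolding within_two_def by blast
  then have "no_two_path n v g = 1"
    unfolding no_two_path_def two_path_def by (intro prod.neutral) auto
  then show ?thesis
    using member_le_sum[of v "{2..n}" "\<lambda>u. no_two_path n u g"] v(1) no_two_path_nonneg by simp
qed

text \<open>The paths \<open>v, w, 1\<close> for distinct \<open>w\<close> are edge-disjoint, hence present independently.\<close>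

lemma subset_expectation_no_two_path:
  assumes "v \<in> {2..n}"
  shows "subset_expectation p (all_edges n) (no_two_path n v) = (1 - p ^ 2) ^ (n - 2)"
proof -
  have paths: "two_path v w \<subseteq> all_edges n" "card (two_path v w) = 2" if "w \<in> {2..n} - {v}" for w
    using that assms by (auto simp: two_path_def doubleton_mem_all_edges_iff doubleton_eq_iff)
  have "two_path v w \<inter> two_path v w' = {}" if "w \<in> {2..n} - {v}" "w' \<in> {2..n} - {v}" "w \<noteq> w'" for w w'
    using that assms by (auto simp: two_path_def doubleton_eq_iff)
  then have "subset_expectation p (all_edges n) (no_two_path n v) =
      (\<Prod>w\<in>{2..n} - {v}. subset_expectation p (two_path v w) (\<lambda>a. if a = two_path v w then 0 else 1))"
    unfolding no_two_path_def[abs_def] using paths finite_all_edges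
    by (intro subset_expectation_prod) auto
  also have "\<dots> = (\<Prod>w\<in>{2..n} - {v}. 1 - p ^ 2)"
    using paths by (intro prod.cong refl) (simp add: subset_expectation_not_full two_path_def)
  also have "\<dots> = (1 - p ^ 2) ^ (n - 2)"
    using assms by (simp add: card_Diff_singleton numeral_2_eq_2)
  finally show ?thesis .
qed

lemma subset_expectation_not_within_two_le:
  assumes "0 \<le> p" "p \<le> 1"
  shows "subset_expectation p (all_edges n) (\<lambda>g. if within_two g n then 0 else 1)
    \<le> real (n - 1) * (1 - p ^ 2) ^ (n - 2)"
proof -
  have "subset_expectation p (all_edges n) (\<lambda>g. if within_two g n then 0 else 1) \<le>
      subset_expectation p (all_edges n) (\<lambda>g. \<Sum>v\<in>{2..n}. no_two_path n v g)"
    using not_within_two_le_sum_no_two_path no_two_path_nonneg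
    by (intro subset_expectation_mono assms) (auto intro: sum_nonneg)
  also have "\<dots> = real (n - 1) * (1 - p ^ 2) ^ (n - 2)"
    by (simp add: subset_expectation_sum subset_expectation_no_two_path)
  finally show ?thesis .
qed

definition gnp_return_time :: "nat \<Rightarrow> real \<Rightarrow> real" where
  "gnp_return_time n p = subset_expectation p (all_edges n) (\<lambda>g. mean_return_time g n)"

context
  fixes n :: nat and p :: real
  assumes two_le_n: "2 \<le> n" and p: "0 \<le> p" "p \<le> 1"
begin

lemma exp_tau_eq_gnp_return_time: "exp_tau n p = ennreal (gnp_return_time n p)"
proof -
  have one_le_n: "1 \<le> n"
    using two_le_n by simp
  have "exp_tau n p = (\<Sum>g\<in>Pow (all_edges n). ennreal (subset_weight p (all_edges n) g * mean_return_time g n))"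
    unfolding exp_tau_def
  proof (intro sum.cong refl)
    fix g
    assume "g \<in> Pow (all_edges n)"
    then have g: "g \<subseteq> all_edges n"
      by simp
    have "gnp_prob n p g = subset_weight p (all_edges n) g"
      by (simp add: gnp_prob_def subset_weight_def)
    moreover have "0 \<le> subset_weight p (all_edges n) g" "0 \<le> mean_return_time g n"
      using subset_weight_nonneg[OF p] one_le_mean_return_time[OF g one_le_n] by auto
    ultimately show "ennreal (gnp_prob n p g) * exp_return n g =
        ennreal (subset_weight p (all_edges n) g * mean_return_time g n)"
      using exp_return_eq_mean_return_time[OF g one_le_n] by (simp add: ennreal_mult)
  qed
  also have "\<dots> = ennreal (gnp_return_time n p)"
  proof -
    have "0 \<le> mean_return_time g n" if "g \<subseteq> all_edges n" for g
      using one_le_mean_return_time[OF that one_le_n] by linarith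
    then show ?thesis
      unfolding gnp_return_time_def subset_expectation_def
      by (intro sum_ennreal mult_nonneg_nonneg subset_weight_nonneg p) auto
  qed
  finally show ?thesis .
qed

lemma one_le_gnp_return_time: "1 \<le> gnp_return_time n p"
  using subset_expectation_mono[OF p, of "all_edges n" "\<lambda>_. 1"] one_le_mean_return_time two_le_n
  by (simp add: gnp_return_time_def subset_expectation_const finite_all_edges)

lemma gnp_return_time_le: "gnp_return_time n p \<le> mean_kac_time n p"
  unfolding gnp_return_time_def mean_kac_time_def
  using mean_return_time_le_kac_time two_le_n by (intro subset_expectation_mono p) auto

lemma gnp_return_time_ge:
  "mean_kac_time n p - real n ^ 2 * (real (n - 1) * (1 - p ^ 2) ^ (n - 2)) \<le> gnp_return_time n p"
proof -
  have "mean_kac_time n p - real n ^ 2 * subset_expectation p (all_edges n) (\<lambda>g. if within_two g n then 0 else 1)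
      = subset_expectation p (all_edges n) (\<lambda>g. kac_time g n - real n ^ 2 * (if within_two g n then 0 else 1))"
    by (simp add: mean_kac_time_def subset_expectation_diff subset_expectation_cmult)
  also have "\<dots> \<le> gnp_return_time n p"
    unfolding gnp_return_time_def
  proof (intro subset_expectation_mono p)
    fix g
    assume g: "g \<subseteq> all_edges n"
    have one_le_n: "1 \<le> n"
      using two_le_n by simp
    show "kac_time g n - real n ^ 2 * (if within_two g n then 0 else 1) \<le> mean_return_time g n"
      using mean_return_time_eq_kac_time[OF g one_le_n two_le_n] kac_time_le_square[OF g one_le_n]
        one_le_mean_return_time[OF g one_le_n]
      by (cases "within_two g n") auto
  qed
  moreover have "real n ^ 2 * subset_expectation p (all_edges n) (\<lambda>g. if within_two g n then 0 else 1)
      \<le> real n ^ 2 * (real (n - 1) * (1 - p ^ 2) ^ (n - 2))"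
    using subset_expectation_not_within_two_le[OF p] by (intro mult_left_mono) auto
  ultimately show ?thesis
    by linarith
qed

end

section \<open>Asymptotics of the mean return time under \<open>G(n, p)\<close>\<close>

lemma tendsto_square_mult_power_zero:
  fixes r c :: real
  assumes "0 \<le> r" "r < 1"
  shows "(\<lambda>m. (real m + c) ^ 2 * r ^ m) \<longlonglongrightarrow> 0"
proof -
  define s where "s = sqrt r"
  have s: "0 \<le> s" "s < 1" "r = s ^ 2"
    using assms by (auto simp: s_def real_sqrt_less_iff)
  have "(\<lambda>m. (real m * s ^ m) ^ 2) \<longlonglongrightarrow> 0 ^ 2"
    using powser_times_n_limit_0[of s] s by (intro tendsto_power) simp
  moreover have "(\<lambda>m. (real m * s ^ m) ^ 2) = (\<lambda>m. real m ^ 2 * r ^ m)"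
    by (simp add: s(3) power_mult_distrib flip: power_mult) (simp add: mult.commute)
  ultimately have "(\<lambda>m. real m ^ 2 * r ^ m + 2 * c * (real m * r ^ m) + c ^ 2 * r ^ m) \<longlonglongrightarrow> 0 + 2 * c * 0 + c ^ 2 * 0"
    using powser_times_n_limit_0[of r] LIMSEQ_realpow_zero[of r] assms by (intro tendsto_intros) auto
  then show ?thesis
    by (simp add: power2_eq_square algebra_simps)
qed

context
  fixes p :: real
  assumes p: "0 < p" "p \<le> 1"
begin

lemma gnp_return_time_div_le_two: "2 \<le> n \<Longrightarrow> gnp_return_time n p / real n \<le> 2"
  using gnp_return_time_le[of n p] mean_kac_time_le_linear[of n p] p by (simp add: divide_le_eq mult.commute)

lemma gnp_return_time_div_le:
  assumes "2 \<le> n"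
  shows "gnp_return_time n p / real n \<le> 1 + (2 + 3 / p) / real n"
proof -
  have "gnp_return_time n p / real n \<le> (real n + 2 + 3 / p) / real n"
    using gnp_return_time_le[OF assms, of p] mean_kac_time_le[OF assms p] p
    by (intro divide_right_mono) auto
  also have "\<dots> = 1 + (2 + 3 / p) / real n"
    using assms by (simp add: field_simps)
  finally show ?thesis .
qed

lemma gnp_return_time_div_ge:
  assumes "2 \<le> n"
  shows "real (n - 1) * real (n - 2) / real n ^ 2 - real n ^ 2 * (1 - p ^ 2) ^ (n - 2) \<le> gnp_return_time n p / real n"
proof -
  have "(1 - p) ^ (n - 2) \<le> (1 - p ^ 2) ^ (n - 2)"
    using p by (intro power_mono) (auto simp: power2_eq_square mult_le_cancel_left1)
  then have "real n ^ 2 * (1 - p) ^ (n - 2) \<le> real n ^ 2 * (1 - p ^ 2) ^ (n - 2)"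
    by (rule mult_left_mono) simp
  moreover have "real n ^ 2 * (1 - p ^ 2) ^ (n - 2) + real n ^ 2 * (real (n - 1) * (1 - p ^ 2) ^ (n - 2))
      = real n ^ 3 * (1 - p ^ 2) ^ (n - 2)"
    using assms by (simp add: of_nat_diff power2_eq_square power3_eq_cube algebra_simps)
  ultimately have "real n ^ 2 * (1 - p) ^ (n - 2) + real n ^ 2 * (real (n - 1) * (1 - p ^ 2) ^ (n - 2))
      \<le> real n ^ 3 * (1 - p ^ 2) ^ (n - 2)"
    by linarith
  then have "real (n - 1) * real (n - 2) / real n - real n ^ 3 * (1 - p ^ 2) ^ (n - 2) \<le> gnp_return_time n p"
    using gnp_return_time_ge[OF assms, of p] mean_kac_time_ge[OF assms p] p by linarith
  then have "(real (n - 1) * real (n - 2) / real n - real n ^ 3 * (1 - p ^ 2) ^ (n - 2)) / real n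
      \<le> gnp_return_time n p / real n"
    by (rule divide_right_mono) simp
  moreover have "(real (n - 1) * real (n - 2) / real n - real n ^ 3 * (1 - p ^ 2) ^ (n - 2)) / real n =
      real (n - 1) * real (n - 2) / real n ^ 2 - real n ^ 2 * (1 - p ^ 2) ^ (n - 2)"
    using assms by (simp add: field_simps power2_eq_square power3_eq_cube)
  ultimately show ?thesis
    by simp
qed

lemma tendsto_gnp_return_time_div: "(\<lambda>n. gnp_return_time n p / real n) \<longlonglongrightarrow> 1"
proof -
  define lower where
    "lower n = real (n - 1) * real (n - 2) / real n ^ 2 - real n ^ 2 * (1 - p ^ 2) ^ (n - 2)" for n
  have "(\<lambda>m. c / real (m + 2)) \<longlonglongrightarrow> 0" for c
    using LIMSEQ_ignore_initial_segment[OF lim_const_over_n[of c], of 2] by simp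
  then have "(\<lambda>m. (1 - 1 / real (m + 2)) * (1 - 2 / real (m + 2)) - (real m + 2) ^ 2 * (1 - p ^ 2) ^ m)
      \<longlonglongrightarrow> (1 - 0) * (1 - 0) - 0"
    using p by (intro tendsto_diff tendsto_mult tendsto_const tendsto_square_mult_power_zero)
      (auto simp: power_le_one)
  moreover have "lower (m + 2) = (1 - 1 / real (m + 2)) * (1 - 2 / real (m + 2)) - (real m + 2) ^ 2 * (1 - p ^ 2) ^ m"
    for m
    by (simp add: lower_def field_simps power2_eq_square)
  ultimately have "(\<lambda>m. lower (m + 2)) \<longlonglongrightarrow> 1"
    by simp
  then have "lower \<longlonglongrightarrow> 1"
    by (rule LIMSEQ_offset)
  have "\<forall>\<^sub>F n in sequentially. lower n \<le> gnp_return_time n p / real n"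
    using eventually_ge_at_top[of 2] unfolding lower_def by eventually_elim (rule gnp_return_time_div_ge)
  moreover have "\<forall>\<^sub>F n in sequentially. gnp_return_time n p / real n \<le> 1 + (2 + 3 / p) / real n"
    using eventually_ge_at_top[of 2] by eventually_elim (rule gnp_return_time_div_le)
  moreover note \<open>lower \<longlonglongrightarrow> 1\<close>
  moreover have "(\<lambda>n. 1 + (2 + 3 / p) / real n) \<longlonglongrightarrow> 1"
    using tendsto_add[OF tendsto_const lim_const_over_n[of "2 + 3 / p"], of 1] by simp
  ultimately show ?thesis
    by (rule tendsto_sandwich)
qed

end

lemma gnp_return_time_measurable [measurable]: "gnp_return_time n \<in> borel_measurable borel"
  unfolding gnp_return_time_def[abs_def] subset_expectation_def subset_weight_def by measurable

section \<open>Convergence of the tilted measures\<close>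

lemma tendsto_divide_one_ennreal:
  fixes f g :: "nat \<Rightarrow> ennreal"
  assumes "f \<longlonglongrightarrow> a" "g \<longlonglongrightarrow> 1"
  shows "(\<lambda>n. f n / g n) \<longlonglongrightarrow> a"
proof -
  have "continuous_on UNIV (\<lambda>x::ennreal. inverse x)"
    by (intro continuous_intros)
  then have "isCont inverse (1::ennreal)"
    by (simp add: continuous_on_eq_continuous_at)
  from isCont_tendsto_compose[OF this assms(2)]
  have "(\<lambda>n. f n * inverse (g n)) \<longlonglongrightarrow> a * inverse 1"
    using assms(1) by (intro tendsto_mult_ennreal) auto
  then show ?thesis
    by (simp add: divide_ennreal_def)
qed

lemma (in prob_space) set_nn_integral_tendsto_emeasure:
  fixes h :: "nat \<Rightarrow> 'a \<Rightarrow> real"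
  assumes S: "S \<in> events"
    and h_measurable: "\<And>n. h n \<in> borel_measurable M"
    and h_bounded: "\<And>n x. x \<in> space M \<Longrightarrow> 0 \<le> h n x \<and> h n x \<le> B"
    and h_tendsto: "\<And>x. x \<in> space M \<Longrightarrow> (\<lambda>n. h n x) \<longlonglongrightarrow> 1"
  shows "(\<lambda>n. \<integral>\<^sup>+x\<in>S. h n x \<partial>M) \<longlonglongrightarrow> emeasure M S"
proof -
  have "(\<lambda>n. \<integral>\<^sup>+x. ennreal (h n x) * indicator S x \<partial>M) \<longlonglongrightarrow> (\<integral>\<^sup>+x. indicator S x \<partial>M)"
  proof (rule nn_integral_dominated_convergence[where w = "\<lambda>_. ennreal B"])
    show "AE x in M. ennreal (h n x) * indicator S x \<le> ennreal B" for n
    proof (rule AE_I2)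
      fix x
      assume "x \<in> space M"
      then show "ennreal (h n x) * indicator S x \<le> ennreal B"
        using h_bounded[of x n] by (auto simp: indicator_def intro: ennreal_leI)
    qed
    show "AE x in M. (\<lambda>n. ennreal (h n x) * indicator S x) \<longlonglongrightarrow> indicator S x"
    proof (rule AE_I2)
      fix x
      assume "x \<in> space M"
      then have "(\<lambda>n. ennreal (h n x)) \<longlonglongrightarrow> ennreal 1"
        using h_tendsto by (intro tendsto_ennrealI)
      then show "(\<lambda>n. ennreal (h n x) * indicator S x) \<longlonglongrightarrow> indicator S x"
        by (auto simp: indicator_def)
    qed
  qed (use S h_measurable in \<open>auto simp: emeasure_space_1\<close>)
  then show ?thesis
    using S by simp
qed

lemma set_nn_integral_ennreal_cmult:
  assumes [measurable]: "S \<in> sets M" "h \<in> borel_measurable M"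
    and "0 \<le> c" "\<And>x. x \<in> space M \<Longrightarrow> 0 \<le> h x"
  shows "(\<integral>\<^sup>+x\<in>S. ennreal (c * h x) \<partial>M) = (\<integral>\<^sup>+x\<in>S. h x \<partial>M) * ennreal c"
proof -
  have "(\<integral>\<^sup>+x\<in>S. ennreal (c * h x) \<partial>M) = (\<integral>\<^sup>+x. ennreal c * (ennreal (h x) * indicator S x) \<partial>M)"
    using assms(3,4) by (intro nn_integral_cong) (simp add: ennreal_mult mult.assoc)
  also have "\<dots> = ennreal c * (\<integral>\<^sup>+x\<in>S. h x \<partial>M)"
    by (intro nn_integral_cmult) measurable
  finally show ?thesis
    by (simp add: mult.commute)
qed

lemma nn_integral_ratio_tendsto_emeasure:
  fixes h :: "nat \<Rightarrow> 'a \<Rightarrow> real" and c :: "nat \<Rightarrow> real"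
  assumes "prob_space M" and A: "A \<in> sets M"
    and h_measurable: "\<And>n. h n \<in> borel_measurable M"
    and h_bounded: "\<And>n x. x \<in> space M \<Longrightarrow> 0 \<le> h n x \<and> h n x \<le> B"
    and h_tendsto: "\<And>x. x \<in> space M \<Longrightarrow> (\<lambda>n. h n x) \<longlonglongrightarrow> 1"
    and c_pos: "\<And>n. 0 < c n"
  shows "(\<lambda>n. (\<integral>\<^sup>+x\<in>A. ennreal (c n * h n x) \<partial>M) / (\<integral>\<^sup>+x. ennreal (c n * h n x) \<partial>M)) \<longlonglongrightarrow> emeasure M A"
proof -
  interpret prob_space M
    by fact
  have scale: "(\<integral>\<^sup>+x\<in>S. ennreal (c n * h n x) \<partial>M) = (\<integral>\<^sup>+x\<in>S. h n x \<partial>M) * ennreal (c n)"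
    if "S \<in> sets M" for S n
    using that h_measurable c_pos[of n] h_bounded by (intro set_nn_integral_ennreal_cmult) auto
  have "(\<integral>\<^sup>+x. ennreal (c n * h n x) \<partial>M) = (\<integral>\<^sup>+x\<in>space M. ennreal (c n * h n x) \<partial>M)" for n
    by (intro nn_integral_cong) simp
  then have "(\<integral>\<^sup>+x\<in>A. ennreal (c n * h n x) \<partial>M) / (\<integral>\<^sup>+x. ennreal (c n * h n x) \<partial>M) =
      (\<integral>\<^sup>+x\<in>A. h n x \<partial>M) / (\<integral>\<^sup>+x\<in>space M. h n x \<partial>M)" for n
    unfolding scale[OF A] scale[OF sets.top] using c_pos[of n] by (simp add: divide_mult_eq)
  moreover have "(\<lambda>n. (\<integral>\<^sup>+x\<in>A. h n x \<partial>M) / (\<integral>\<^sup>+x\<in>space M. h n x \<partial>M)) \<longlonglongrightarrow> emeasure M A"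
    using set_nn_integral_tendsto_emeasure[OF A h_measurable h_bounded h_tendsto]
      set_nn_integral_tendsto_emeasure[OF sets.top h_measurable h_bounded h_tendsto]
    by (intro tendsto_divide_one_ennreal) (simp_all add: emeasure_space_1)
  ultimately show ?thesis
    by simp
qed

theorem theorem1:
  fixes M :: "real measure" and A :: "real set"
  assumes "prob_space M"
    and "sets M = sets (restrict_space borel {0<..1})"
    and "A \<in> sets M"
  shows "(\<lambda>n. mu_tilt M n A) \<longlonglongrightarrow> emeasure M A"
proof -
  have space: "space M = {0<..1}"
    using sets_eq_imp_space_eq[OF assms(2)] by simp
  define h where "h n p = gnp_return_time (n + 2) p / real (n + 2)" for n p
  have "h n \<in> borel_measurable M" for n
    unfolding h_def measurable_cong_sets[OF assms(2) refl]
    by (intro measurable_restrict_space1) measurable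
  moreover have "0 \<le> h n p \<and> h n p \<le> 2" if "p \<in> space M" for n p
    using that one_le_gnp_return_time[of "n + 2" p] gnp_return_time_div_le_two[of p "n + 2"]
    by (simp add: space h_def)
  moreover have "(\<lambda>n. h n p) \<longlonglongrightarrow> 1" if "p \<in> space M" for p
    using that LIMSEQ_ignore_initial_segment[OF tendsto_gnp_return_time_div, of p 2]
    by (simp add: space h_def)
  ultimately have lim: "(\<lambda>n. (\<integral>\<^sup>+p\<in>A. ennreal (real (n + 2) * h n p) \<partial>M) /
      (\<integral>\<^sup>+p. ennreal (real (n + 2) * h n p) \<partial>M)) \<longlonglongrightarrow> emeasure M A"
    by (intro nn_integral_ratio_tendsto_emeasure[OF assms(1,3)]) auto
  have eq: "mu_tilt M (n + 2) A = (\<integral>\<^sup>+p\<in>A. ennreal (real (n + 2) * h n p) \<partial>M) /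
      (\<integral>\<^sup>+p. ennreal (real (n + 2) * h n p) \<partial>M)" for n
    unfolding mu_tilt_def h_def
    by (intro arg_cong2[where f = "(/)"] nn_integral_cong) (simp_all add: space exp_tau_eq_gnp_return_time)
  have "(\<lambda>n. mu_tilt M (n + 2) A) \<longlonglongrightarrow> emeasure M A"
    unfolding eq by (rule lim)
  then show ?thesis
    by (rule LIMSEQ_offset)
qed

end
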